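(* Let $X,Y$ be compact metric spaces, $\epsilon\ge0$, and $X_\epsilon, Y_\epsilon$ finite $\epsilon$-nets of $X$ and $Y$. Let $f:X_\epsilon\to Y_\epsilon$ and $g:Y_\epsilon\to X_\epsilon$ satisfy $\frac12\max\{\operatorname{dis}(f),\operatorname{dis}(g)\}=\widehat{d}_{\mathrm{GH}}(X_\epsilon,Y_\epsilon)$. Define subsets $X_k\subseteq X_\epsilon$ by $X_0=X_\epsilon$, $X_1=g(Y_\epsilon)$, $X_k=(g\circ f)(X_{k-2})$ for $k>1$ (with the restricted metric). Let $\delta\ge0$. If $d_{\mathrm{GH}}(X_k,X_{k+1})\le\delta$ for some $k\ge0$, then $d_{\mathrm{GH}}(X,Y)\le(2k+1)\widehat{d}_{\mathrm{GH}}(X,Y)+(2k+2)\epsilon+\delta$.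
   Context: An $\epsilon$-net of $X$ is a subset such that every point of $X$ is within distance $\le\epsilon$ of it. For $f:X\to Y$, $\operatorname{dis}(f)=\sup_{x,x'}|d_X(x,x')-d_Y(f(x),f(x'))|$; $\operatorname{codis}(f,g)=\sup_{x,y}|d_X(x,g(y))-d_Y(f(x),y)|$. $d_{\mathrm{GH}}$ is the Gromov--Hausdorff distance, equal to $\frac12\inf_{f,g}\max\{\operatorname{dis}(f),\operatorname{dis}(g),\operatorname{codis}(f,g)\}$; $\widehat{d}_{\mathrm{GH}}(X,Y)=\frac12\max\{\inf_{f:X\to Y}\operatorname{dis}(f),\inf_{g:Y\to X}\operatorname{dis}(g)\}$. *)

theory Defs
  imports "HOL-Analysis.Analysis"
begin

text \<open>Metric spaces are modelled as subsets of metric_space types, with the restricted metric.\<close>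

definition is_eps_net :: "real \<Rightarrow> 'a::metric_space set \<Rightarrow> 'a set \<Rightarrow> bool" where
  "is_eps_net \<epsilon> X N \<longleftrightarrow> N \<subseteq> X \<and> (\<forall>x\<in>X. \<exists>n\<in>N. dist x n \<le> \<epsilon>)"

definition dis :: "('a::metric_space \<Rightarrow> 'b::metric_space) \<Rightarrow> 'a set \<Rightarrow> real" where
  "dis f X = (SUP p\<in>X \<times> X. \<bar>dist (fst p) (snd p) - dist (f (fst p)) (f (snd p))\<bar>)"

definition codis :: "('a::metric_space \<Rightarrow> 'b::metric_space) \<Rightarrow> ('b \<Rightarrow> 'a) \<Rightarrow> 'a set \<Rightarrow> 'b set \<Rightarrow> real" where
  "codis f g X Y = (SUP p\<in>X \<times> Y. \<bar>dist (fst p) (g (snd p)) - dist (f (fst p)) (snd p)\<bar>)"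

definition dGH :: "'a::metric_space set \<Rightarrow> 'b::metric_space set \<Rightarrow> real" where
  "dGH X Y = (1/2) * (INF p\<in>{(f, g). f ` X \<subseteq> Y \<and> g ` Y \<subseteq> X}.
      max (dis (fst p) X) (max (dis (snd p) Y) (codis (fst p) (snd p) X Y)))"

definition dGH_hat :: "'a::metric_space set \<Rightarrow> 'b::metric_space set \<Rightarrow> real" where
  "dGH_hat X Y = (1/2) * max (INF f\<in>{f. f ` X \<subseteq> Y}. dis f X) (INF g\<in>{g. g ` Y \<subseteq> X}. dis g Y)"

fun Xseq :: "('a \<Rightarrow> 'b) \<Rightarrow> ('b \<Rightarrow> 'a) \<Rightarrow> 'a set \<Rightarrow> 'b set \<Rightarrow> nat \<Rightarrow> 'a set" where
  "Xseq f g Xe Ye 0 = Xe"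
| "Xseq f g Xe Ye (Suc 0) = g ` Ye"
| "Xseq f g Xe Ye (Suc (Suc k)) = (g \<circ> f) ` Xseq f g Xe Ye k"

end

theory Submission
  imports Defs
begin

text \<open>Call a pair of maps \<open>F : A \<rightarrow> B\<close>, \<open>G : B \<rightarrow> A\<close> with \<open>dis F \<le> a\<close>, \<open>dis G \<le> b\<close> and
  \<open>codis F G \<le> c\<close> an \<open>(a, b, c)\<close>-pair (\<open>gh_maps A B a b c\<close>). It gives \<open>dGH A B \<le> max a (max b c) / 2\<close>,
  and pairs compose with additive bounds. With \<open>r = dGH_hat X\<^sub>\<epsilon> Y\<^sub>\<epsilon>\<close>, the map \<open>g \<circ> f\<close> has
  distortion at most \<open>4r\<close> and maps \<open>X\<^sub>j\<close> onto \<open>X\<^sub>j\<^sub>+\<^sub>2\<close>; so, counting \<open>Y\<^sub>\<epsilon>\<close> as index \<open>-1\<close> (it is mapped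
  onto \<open>X\<^sub>1\<close> by \<open>g\<close>), walking along the sequence costs \<open>2r\<close> per index step. Walking from the nets
  to \<open>X\<^sub>k\<close> and to \<open>X\<^sub>k\<^sub>+\<^sub>1\<close>, and bridging these two by an almost optimal pair, gives a
  \<open>((4k + 2) r + 2\<delta>)\<close>-pair between the nets. An \<open>\<epsilon>\<close>-net is joined to its space by a
  \<open>(2\<epsilon>, 0, \<epsilon>)\<close>-pair, and \<open>r \<le> dGH_hat X Y + \<epsilon>\<close> because composing a map \<open>X \<rightarrow> Y\<close> with a
  nearest-point retraction onto \<open>Y\<^sub>\<epsilon>\<close> adds at most \<open>2\<epsilon>\<close> to its distortion.\<close>

lemma abs_dist_diff_le_add: "\<bar>dist a b - dist c d\<bar> \<le> dist a c + dist b d"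
proof -
  have "dist a b \<le> dist a c + dist c d + dist d b"
    using dist_triangle[of a b c] dist_triangle[of c b d] by linarith
  moreover have "dist c d \<le> dist c a + dist a b + dist b d"
    using dist_triangle[of c d a] dist_triangle[of a d b] by linarith
  ultimately show ?thesis by (simp add: abs_le_iff dist_commute)
qed

lemma bounded_abs_dist_diff:
  assumes "bounded A" "bounded B"
  obtains M where "\<And>x x' y y'. x \<in> A \<Longrightarrow> x' \<in> A \<Longrightarrow> y \<in> B \<Longrightarrow> y' \<in> B \<Longrightarrow>
    \<bar>dist x x' - dist y y'\<bar> \<le> M"
proof -
  obtain e\<^sub>A where e\<^sub>A: "\<forall>x\<in>A. \<forall>x'\<in>A. dist x x' \<le> e\<^sub>A"
    using assms(1) bounded_two_points by blast
  obtain e\<^sub>B where e\<^sub>B: "\<forall>y\<in>B. \<forall>y'\<in>B. dist y y' \<le> e\<^sub>B"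
    using assms(2) bounded_two_points by blast
  have "\<bar>dist x x' - dist y y'\<bar> \<le> e\<^sub>A + e\<^sub>B" if "x \<in> A" "x' \<in> A" "y \<in> B" "y' \<in> B"
    for x x' y y'
  proof -
    have "dist x x' \<le> e\<^sub>A" "dist y y' \<le> e\<^sub>B" using that e\<^sub>A e\<^sub>B by auto
    then show ?thesis
      unfolding abs_le_iff using zero_le_dist[of x x'] zero_le_dist[of y y'] by linarith
  qed
  then show ?thesis by (rule that)
qed

lemma dis_upper:
  assumes "bounded A" "bounded B" "F ` A \<subseteq> B" "x \<in> A" "x' \<in> A"
  shows "\<bar>dist x x' - dist (F x) (F x')\<bar> \<le> dis F A"
proof -
  let ?d = "\<lambda>p. \<bar>dist (fst p) (snd p) - dist (F (fst p)) (F (snd p))\<bar>"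
  obtain M where M: "\<And>x x' y y'. x \<in> A \<Longrightarrow> x' \<in> A \<Longrightarrow> y \<in> B \<Longrightarrow> y' \<in> B \<Longrightarrow>
      \<bar>dist x x' - dist y y'\<bar> \<le> M"
    using bounded_abs_dist_diff[OF assms(1,2)] by blast
  have "bdd_above (?d ` (A \<times> A))"
  proof (rule bdd_aboveI2)
    fix p assume "p \<in> A \<times> A"
    with assms(3) show "?d p \<le> M" by (intro M) auto
  qed
  with assms(4,5) have "?d (x, x') \<le> Sup (?d ` (A \<times> A))" by (intro cSUP_upper) auto
  then show ?thesis unfolding dis_def by simp
qed

lemma codis_upper:
  assumes "bounded A" "bounded B" "F ` A \<subseteq> B" "G ` B \<subseteq> A" "x \<in> A" "y \<in> B"
  shows "\<bar>dist x (G y) - dist (F x) y\<bar> \<le> codis F G A B"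
proof -
  let ?d = "\<lambda>p. \<bar>dist (fst p) (G (snd p)) - dist (F (fst p)) (snd p)\<bar>"
  obtain M where M: "\<And>x x' y y'. x \<in> A \<Longrightarrow> x' \<in> A \<Longrightarrow> y \<in> B \<Longrightarrow> y' \<in> B \<Longrightarrow>
      \<bar>dist x x' - dist y y'\<bar> \<le> M"
    using bounded_abs_dist_diff[OF assms(1,2)] by blast
  have "bdd_above (?d ` (A \<times> B))"
  proof (rule bdd_aboveI2)
    fix p assume "p \<in> A \<times> B"
    with assms(3,4) show "?d p \<le> M" by (intro M) auto
  qed
  with assms(5,6) have "?d (x, y) \<le> Sup (?d ` (A \<times> B))" by (intro cSUP_upper) auto
  then show ?thesis unfolding codis_def by simp
qed

lemma dis_leI:
  assumes "A \<noteq> {}" "\<And>x x'. x \<in> A \<Longrightarrow> x' \<in> A \<Longrightarrow> \<bar>dist x x' - dist (F x) (F x')\<bar> \<le> c"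
  shows "dis F A \<le> c"
  unfolding dis_def using assms by (intro cSUP_least) auto

lemma codis_leI:
  assumes "A \<noteq> {}" "B \<noteq> {}" "\<And>x y. x \<in> A \<Longrightarrow> y \<in> B \<Longrightarrow> \<bar>dist x (G y) - dist (F x) y\<bar> \<le> c"
  shows "codis F G A B \<le> c"
  unfolding codis_def using assms by (intro cSUP_least) auto

lemma dis_nonneg:
  assumes "bounded A" "bounded B" "F ` A \<subseteq> B" "A \<noteq> {}"
  shows "0 \<le> dis F A"
proof -
  obtain x where "x \<in> A" using assms(4) by blast
  from dis_upper[OF assms(1-3) this this] show ?thesis by simp
qed

lemma dis_comp_near_id_le:
  assumes "bounded X" "bounded Y" "\<phi> ` X \<subseteq> Y" "A \<subseteq> X" "A \<noteq> {}"
    and "\<And>y. y \<in> Y \<Longrightarrow> dist y (\<pi> y) \<le> \<epsilon>"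
  shows "dis (\<pi> \<circ> \<phi>) A \<le> dis \<phi> X + 2 * \<epsilon>"
proof (rule dis_leI[OF assms(5)])
  fix x x' assume "x \<in> A" "x' \<in> A"
  with assms(3,4) have "x \<in> X" "x' \<in> X" "\<phi> x \<in> Y" "\<phi> x' \<in> Y" by auto
  have "\<bar>dist x x' - dist (\<phi> x) (\<phi> x')\<bar> \<le> dis \<phi> X"
    using dis_upper[OF assms(1-3) \<open>x \<in> X\<close> \<open>x' \<in> X\<close>] .
  moreover have "\<bar>dist (\<phi> x) (\<phi> x') - dist (\<pi> (\<phi> x)) (\<pi> (\<phi> x'))\<bar> \<le> 2 * \<epsilon>"
    using abs_dist_diff_le_add[of "\<phi> x" "\<phi> x'" "\<pi> (\<phi> x)" "\<pi> (\<phi> x')"]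
      assms(6)[OF \<open>\<phi> x \<in> Y\<close>] assms(6)[OF \<open>\<phi> x' \<in> Y\<close>] by linarith
  ultimately show "\<bar>dist x x' - dist ((\<pi> \<circ> \<phi>) x) ((\<pi> \<circ> \<phi>) x')\<bar> \<le> dis \<phi> X + 2 * \<epsilon>"
    by (simp add: abs_le_iff)
qed

lemma eps_net_retraction:
  assumes "is_eps_net \<epsilon> X N"
  obtains \<pi> where "\<And>x. x \<in> X \<Longrightarrow> \<pi> x \<in> N" "\<And>x. x \<in> X \<Longrightarrow> dist x (\<pi> x) \<le> \<epsilon>"
proof -
  have "\<forall>x\<in>X. \<exists>n. n \<in> N \<and> dist x n \<le> \<epsilon>" using assms unfolding is_eps_net_def by blast
  from bchoice[OF this] obtain \<pi> where "\<forall>x\<in>X. \<pi> x \<in> N \<and> dist x (\<pi> x) \<le> \<epsilon>" by blast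
  then show ?thesis using that by blast
qed

lemma eps_net_nonempty: "is_eps_net \<epsilon> X N \<Longrightarrow> X \<noteq> {} \<Longrightarrow> N \<noteq> {}"
  unfolding is_eps_net_def by blast

lemma INF_dis_eps_net_le:
  assumes "bounded X" "bounded Y" "Y \<noteq> {}" "A \<subseteq> X" "A \<noteq> {}" "is_eps_net \<epsilon> Y N"
  shows "(INF f\<in>{f. f ` A \<subseteq> N}. dis f A) \<le> (INF \<phi>\<in>{\<phi>. \<phi> ` X \<subseteq> Y}. dis \<phi> X) + 2 * \<epsilon>"
proof -
  obtain \<pi> where \<pi>: "\<And>y. y \<in> Y \<Longrightarrow> \<pi> y \<in> N" "\<And>y. y \<in> Y \<Longrightarrow> dist y (\<pi> y) \<le> \<epsilon>"
    using eps_net_retraction[OF assms(6)] by blast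
  have "N \<subseteq> Y" using assms(6) unfolding is_eps_net_def by blast
  then have "bounded N" using assms(2) bounded_subset by blast
  have bdd: "bdd_below ((\<lambda>f. dis f A) ` {f. f ` A \<subseteq> N})"
  proof (rule bdd_belowI2)
    fix f assume "f \<in> {f. f ` A \<subseteq> N}"
    then show "0 \<le> dis f A"
      using dis_nonneg[OF bounded_subset[OF assms(1,4)] \<open>bounded N\<close> _ assms(5)] by blast
  qed
  have "(INF f\<in>{f. f ` A \<subseteq> N}. dis f A) - 2 * \<epsilon> \<le> dis \<phi> X" if "\<phi> ` X \<subseteq> Y" for \<phi>
  proof -
    have "(\<pi> \<circ> \<phi>) ` A \<subseteq> N" using that assms(4) \<pi>(1) by auto
    moreover have "dis (\<pi> \<circ> \<phi>) A \<le> dis \<phi> X + 2 * \<epsilon>"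
      by (rule dis_comp_near_id_le[OF assms(1,2) that assms(4,5) \<pi>(2)])
    ultimately have "(INF f\<in>{f. f ` A \<subseteq> N}. dis f A) \<le> dis \<phi> X + 2 * \<epsilon>"
      by (intro cINF_lower2[OF bdd]) auto
    then show ?thesis by simp
  qed
  moreover obtain y where "y \<in> Y" using assms(3) by blast
  then have "(\<lambda>_. y) \<in> {\<phi>. \<phi> ` X \<subseteq> Y}" by auto
  ultimately have "(INF f\<in>{f. f ` A \<subseteq> N}. dis f A) - 2 * \<epsilon> \<le> (INF \<phi>\<in>{\<phi>. \<phi> ` X \<subseteq> Y}. dis \<phi> X)"
    by (intro cINF_greatest) auto
  then show ?thesis by simp
qed

lemma dGH_hat_eps_nets_le:
  assumes "bounded X" "bounded Y" "X \<noteq> {}" "Y \<noteq> {}"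
    and "is_eps_net \<epsilon> X Xe" "is_eps_net \<epsilon> Y Ye"
  shows "dGH_hat Xe Ye \<le> dGH_hat X Y + \<epsilon>"
proof -
  have "Xe \<subseteq> X" "Ye \<subseteq> Y" using assms(5,6) unfolding is_eps_net_def by auto
  have "(INF f\<in>{f. f ` Xe \<subseteq> Ye}. dis f Xe) \<le> (INF \<phi>\<in>{\<phi>. \<phi> ` X \<subseteq> Y}. dis \<phi> X) + 2 * \<epsilon>"
    by (rule INF_dis_eps_net_le[OF assms(1,2,4) \<open>Xe \<subseteq> X\<close> eps_net_nonempty[OF assms(5,3)] assms(6)])
  moreover have "(INF g\<in>{g. g ` Ye \<subseteq> Xe}. dis g Ye) \<le> (INF \<psi>\<in>{\<psi>. \<psi> ` Y \<subseteq> X}. dis \<psi> Y) + 2 * \<epsilon>"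
    by (rule INF_dis_eps_net_le[OF assms(2,1,3) \<open>Ye \<subseteq> Y\<close> eps_net_nonempty[OF assms(6,4)] assms(5)])
  ultimately show ?thesis unfolding dGH_hat_def by (simp add: max_def)
qed

definition gh_maps :: "'a::metric_space set \<Rightarrow> 'b::metric_space set \<Rightarrow> real \<Rightarrow> real \<Rightarrow> real \<Rightarrow> bool" where
  "gh_maps A B a b c \<longleftrightarrow> (\<exists>F G. F ` A \<subseteq> B \<and> G ` B \<subseteq> A
     \<and> (\<forall>x\<in>A. \<forall>x'\<in>A. \<bar>dist x x' - dist (F x) (F x')\<bar> \<le> a)
     \<and> (\<forall>y\<in>B. \<forall>y'\<in>B. \<bar>dist y y' - dist (G y) (G y')\<bar> \<le> b)
     \<and> (\<forall>x\<in>A. \<forall>y\<in>B. \<bar>dist x (G y) - dist (F x) y\<bar> \<le> c))"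

lemma gh_mapsI:
  assumes "F ` A \<subseteq> B" "G ` B \<subseteq> A"
    and "\<And>x x'. x \<in> A \<Longrightarrow> x' \<in> A \<Longrightarrow> \<bar>dist x x' - dist (F x) (F x')\<bar> \<le> a"
    and "\<And>y y'. y \<in> B \<Longrightarrow> y' \<in> B \<Longrightarrow> \<bar>dist y y' - dist (G y) (G y')\<bar> \<le> b"
    and "\<And>x y. x \<in> A \<Longrightarrow> y \<in> B \<Longrightarrow> \<bar>dist x (G y) - dist (F x) y\<bar> \<le> c"
  shows "gh_maps A B a b c"
  unfolding gh_maps_def using assms by (intro exI[of _ F] exI[of _ G]) auto

lemma gh_mapsE:
  assumes "gh_maps A B a b c"
  obtains F G where "F ` A \<subseteq> B" "G ` B \<subseteq> A"
    and "\<And>x x'. x \<in> A \<Longrightarrow> x' \<in> A \<Longrightarrow> \<bar>dist x x' - dist (F x) (F x')\<bar> \<le> a"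
    and "\<And>y y'. y \<in> B \<Longrightarrow> y' \<in> B \<Longrightarrow> \<bar>dist y y' - dist (G y) (G y')\<bar> \<le> b"
    and "\<And>x y. x \<in> A \<Longrightarrow> y \<in> B \<Longrightarrow> \<bar>dist x (G y) - dist (F x) y\<bar> \<le> c"
proof -
  from assms obtain F G where FG: "F ` A \<subseteq> B" "G ` B \<subseteq> A"
    "\<forall>x\<in>A. \<forall>x'\<in>A. \<bar>dist x x' - dist (F x) (F x')\<bar> \<le> a"
    "\<forall>y\<in>B. \<forall>y'\<in>B. \<bar>dist y y' - dist (G y) (G y')\<bar> \<le> b"
    "\<forall>x\<in>A. \<forall>y\<in>B. \<bar>dist x (G y) - dist (F x) y\<bar> \<le> c"
    unfolding gh_maps_def by blast
  show thesis by (rule that[of F G]) (use FG in auto)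
qed

lemma gh_maps_refl: "gh_maps A A 0 0 0"
  by (rule gh_mapsI[of id _ _ id]) auto

lemma gh_maps_sym:
  assumes "gh_maps A B a b c"
  shows "gh_maps B A b a c"
proof -
  obtain F G where FG: "F ` A \<subseteq> B" "G ` B \<subseteq> A"
    "\<And>x x'. x \<in> A \<Longrightarrow> x' \<in> A \<Longrightarrow> \<bar>dist x x' - dist (F x) (F x')\<bar> \<le> a"
    "\<And>y y'. y \<in> B \<Longrightarrow> y' \<in> B \<Longrightarrow> \<bar>dist y y' - dist (G y) (G y')\<bar> \<le> b"
    "\<And>x y. x \<in> A \<Longrightarrow> y \<in> B \<Longrightarrow> \<bar>dist x (G y) - dist (F x) y\<bar> \<le> c"
    using gh_mapsE[OF assms] by blast
  show ?thesis
  proof (rule gh_mapsI[of G _ _ F])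
    fix y x assume "y \<in> B" "x \<in> A"
    have "\<bar>dist y (F x) - dist (G y) x\<bar> = \<bar>dist x (G y) - dist (F x) y\<bar>"
      by (simp add: dist_commute abs_minus_commute)
    also have "\<dots> \<le> c" using FG(5) \<open>x \<in> A\<close> \<open>y \<in> B\<close> .
    finally show "\<bar>dist y (F x) - dist (G y) x\<bar> \<le> c" .
  qed (use FG in auto)
qed

lemma gh_maps_trans:
  assumes "gh_maps A B a\<^sub>1 b\<^sub>1 c\<^sub>1" "gh_maps B C a\<^sub>2 b\<^sub>2 c\<^sub>2"
  shows "gh_maps A C (a\<^sub>1 + a\<^sub>2) (b\<^sub>1 + b\<^sub>2) (c\<^sub>1 + c\<^sub>2)"
proof -
  obtain F\<^sub>1 G\<^sub>1 where 1: "F\<^sub>1 ` A \<subseteq> B" "G\<^sub>1 ` B \<subseteq> A"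
    "\<And>x x'. x \<in> A \<Longrightarrow> x' \<in> A \<Longrightarrow> \<bar>dist x x' - dist (F\<^sub>1 x) (F\<^sub>1 x')\<bar> \<le> a\<^sub>1"
    "\<And>y y'. y \<in> B \<Longrightarrow> y' \<in> B \<Longrightarrow> \<bar>dist y y' - dist (G\<^sub>1 y) (G\<^sub>1 y')\<bar> \<le> b\<^sub>1"
    "\<And>x y. x \<in> A \<Longrightarrow> y \<in> B \<Longrightarrow> \<bar>dist x (G\<^sub>1 y) - dist (F\<^sub>1 x) y\<bar> \<le> c\<^sub>1"
    using gh_mapsE[OF assms(1)] by blast
  obtain F\<^sub>2 G\<^sub>2 where 2: "F\<^sub>2 ` B \<subseteq> C" "G\<^sub>2 ` C \<subseteq> B"
    "\<And>x x'. x \<in> B \<Longrightarrow> x' \<in> B \<Longrightarrow> \<bar>dist x x' - dist (F\<^sub>2 x) (F\<^sub>2 x')\<bar> \<le> a\<^sub>2"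
    "\<And>y y'. y \<in> C \<Longrightarrow> y' \<in> C \<Longrightarrow> \<bar>dist y y' - dist (G\<^sub>2 y) (G\<^sub>2 y')\<bar> \<le> b\<^sub>2"
    "\<And>x y. x \<in> B \<Longrightarrow> y \<in> C \<Longrightarrow> \<bar>dist x (G\<^sub>2 y) - dist (F\<^sub>2 x) y\<bar> \<le> c\<^sub>2"
    using gh_mapsE[OF assms(2)] by blast
  show ?thesis
  proof (rule gh_mapsI[of "F\<^sub>2 \<circ> F\<^sub>1" _ _ "G\<^sub>1 \<circ> G\<^sub>2"])
    show "(F\<^sub>2 \<circ> F\<^sub>1) ` A \<subseteq> C" "(G\<^sub>1 \<circ> G\<^sub>2) ` C \<subseteq> A"
      using 1(1,2) 2(1,2) by (auto simp: image_subset_iff)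
  next
    fix x x' assume "x \<in> A" "x' \<in> A"
    with 1(1) have "F\<^sub>1 x \<in> B" "F\<^sub>1 x' \<in> B" by auto
    with 1(3)[OF \<open>x \<in> A\<close> \<open>x' \<in> A\<close>] 2(3)[OF this]
    show "\<bar>dist x x' - dist ((F\<^sub>2 \<circ> F\<^sub>1) x) ((F\<^sub>2 \<circ> F\<^sub>1) x')\<bar> \<le> a\<^sub>1 + a\<^sub>2" by simp
  next
    fix y y' assume "y \<in> C" "y' \<in> C"
    with 2(2) have "G\<^sub>2 y \<in> B" "G\<^sub>2 y' \<in> B" by auto
    with 2(4)[OF \<open>y \<in> C\<close> \<open>y' \<in> C\<close>] 1(4)[OF this]
    show "\<bar>dist y y' - dist ((G\<^sub>1 \<circ> G\<^sub>2) y) ((G\<^sub>1 \<circ> G\<^sub>2) y')\<bar> \<le> b\<^sub>1 + b\<^sub>2" by simp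
  next
    fix x y assume "x \<in> A" "y \<in> C"
    with 1(1) 2(2) have "F\<^sub>1 x \<in> B" "G\<^sub>2 y \<in> B" by auto
    with 1(5)[OF \<open>x \<in> A\<close> \<open>G\<^sub>2 y \<in> B\<close>] 2(5)[OF \<open>F\<^sub>1 x \<in> B\<close> \<open>y \<in> C\<close>]
    show "\<bar>dist x ((G\<^sub>1 \<circ> G\<^sub>2) y) - dist ((F\<^sub>2 \<circ> F\<^sub>1) x) y\<bar> \<le> c\<^sub>1 + c\<^sub>2" by simp
  qed
qed

lemma gh_maps_image:
  assumes "\<phi> ` A = B"
    and "\<And>x x'. x \<in> A \<Longrightarrow> x' \<in> A \<Longrightarrow> \<bar>dist x x' - dist (\<phi> x) (\<phi> x')\<bar> \<le> c"
  shows "gh_maps A B c c c"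
proof -
  define \<psi> where "\<psi> = inv_into A \<phi>"
  have \<psi>: "\<psi> y \<in> A" "\<phi> (\<psi> y) = y" if "y \<in> B" for y
    using that assms(1) unfolding \<psi>_def by (auto intro: inv_into_into f_inv_into_f)
  show ?thesis
  proof (rule gh_mapsI[of \<phi> _ _ \<psi>])
    fix y y' assume "y \<in> B" "y' \<in> B"
    with assms(2)[of "\<psi> y" "\<psi> y'"] \<psi>
    show "\<bar>dist y y' - dist (\<psi> y) (\<psi> y')\<bar> \<le> c" by (simp add: abs_minus_commute)
  next
    fix x y assume "x \<in> A" "y \<in> B"
    with assms(2)[of x "\<psi> y"] \<psi> show "\<bar>dist x (\<psi> y) - dist (\<phi> x) y\<bar> \<le> c" by simp
  qed (use assms \<psi> in auto)
qed

lemma gh_maps_eps_net: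
  assumes "is_eps_net \<epsilon> X N"
  shows "gh_maps X N (2 * \<epsilon>) 0 \<epsilon>"
proof -
  obtain \<pi> where \<pi>: "\<And>x. x \<in> X \<Longrightarrow> \<pi> x \<in> N" "\<And>x. x \<in> X \<Longrightarrow> dist x (\<pi> x) \<le> \<epsilon>"
    using eps_net_retraction[OF assms] by blast
  show ?thesis
  proof (rule gh_mapsI[of \<pi> _ _ id])
    fix x x' assume "x \<in> X" "x' \<in> X"
    then have "dist x (\<pi> x) \<le> \<epsilon>" "dist x' (\<pi> x') \<le> \<epsilon>" by (simp_all add: \<pi>(2))
    with abs_dist_diff_le_add[of x x' "\<pi> x" "\<pi> x'"]
    show "\<bar>dist x x' - dist (\<pi> x) (\<pi> x')\<bar> \<le> 2 * \<epsilon>" by linarith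
  next
    fix x y assume "x \<in> X"
    have "\<bar>dist x y - dist (\<pi> x) y\<bar> \<le> dist x (\<pi> x)"
      using abs_dist_diff_le_add[of x y "\<pi> x" y] by simp
    also have "\<dots> \<le> \<epsilon>" using \<pi>(2)[OF \<open>x \<in> X\<close>] .
    finally show "\<bar>dist x (id y) - dist (\<pi> x) y\<bar> \<le> \<epsilon>" by simp
  qed (use assms \<pi>(1) in \<open>auto simp: is_eps_net_def\<close>)
qed

lemma dGH_le_gh_maps:
  assumes "bounded A" "bounded B" "A \<noteq> {}" "B \<noteq> {}" "gh_maps A B a b c"
  shows "dGH A B \<le> max a (max b c) / 2"
proof -
  let ?P = "{(F, G). F ` A \<subseteq> B \<and> G ` B \<subseteq> A}"
  let ?M = "\<lambda>p. max (dis (fst p) A) (max (dis (snd p) B) (codis (fst p) (snd p) A B))"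
  obtain F G where FG: "F ` A \<subseteq> B" "G ` B \<subseteq> A"
    "\<And>x x'. x \<in> A \<Longrightarrow> x' \<in> A \<Longrightarrow> \<bar>dist x x' - dist (F x) (F x')\<bar> \<le> a"
    "\<And>y y'. y \<in> B \<Longrightarrow> y' \<in> B \<Longrightarrow> \<bar>dist y y' - dist (G y) (G y')\<bar> \<le> b"
    "\<And>x y. x \<in> A \<Longrightarrow> y \<in> B \<Longrightarrow> \<bar>dist x (G y) - dist (F x) y\<bar> \<le> c"
    using gh_mapsE[OF assms(5)] by blast
  have "bdd_below (?M ` ?P)"
  proof (rule bdd_belowI2)
    fix p assume "p \<in> ?P"
    then have "fst p ` A \<subseteq> B" by auto
    from dis_nonneg[OF assms(1,2) this assms(3)] show "0 \<le> ?M p" by (simp add: le_max_iff_disj)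
  qed
  moreover have "(F, G) \<in> ?P" using FG(1,2) by simp
  moreover have "?M (F, G) \<le> max a (max b c)"
    using max.mono[OF dis_leI[OF assms(3) FG(3)]
        max.mono[OF dis_leI[OF assms(4) FG(4)] codis_leI[OF assms(3,4) FG(5)]]] by simp
  ultimately have "Inf (?M ` ?P) \<le> max a (max b c)" by (rule cINF_lower2)
  then show ?thesis unfolding dGH_def by simp
qed

lemma gh_maps_dGH_less:
  assumes "bounded A" "bounded B" "A \<noteq> {}" "B \<noteq> {}" "dGH A B < d"
  shows "gh_maps A B (2 * d) (2 * d) (2 * d)"
proof -
  let ?P = "{(F, G). F ` A \<subseteq> B \<and> G ` B \<subseteq> A}"
  let ?M = "\<lambda>p. max (dis (fst p) A) (max (dis (snd p) B) (codis (fst p) (snd p) A B))"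
  obtain a\<^sub>0 b\<^sub>0 where "a\<^sub>0 \<in> A" "b\<^sub>0 \<in> B" using assms(3,4) by blast
  then have "(\<lambda>_. b\<^sub>0, \<lambda>_. a\<^sub>0) \<in> ?P" by auto
  then have "?M ` ?P \<noteq> {}" by blast
  moreover have "Inf (?M ` ?P) < 2 * d" using assms(5) unfolding dGH_def by simp
  ultimately have "\<exists>m\<in>?M ` ?P. m < 2 * d" by (rule cInf_lessD)
  then obtain F G where FG: "F ` A \<subseteq> B" "G ` B \<subseteq> A" and "?M (F, G) < 2 * d" by auto
  then have bounds: "dis F A < 2 * d" "dis G B < 2 * d" "codis F G A B < 2 * d" by simp_all
  show ?thesis
  proof (rule gh_mapsI[OF FG])
    fix x x' assume "x \<in> A" "x' \<in> A"
    from dis_upper[OF assms(1,2) FG(1) this] bounds(1)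
    show "\<bar>dist x x' - dist (F x) (F x')\<bar> \<le> 2 * d" by linarith
  next
    fix y y' assume "y \<in> B" "y' \<in> B"
    from dis_upper[OF assms(2,1) FG(2) this] bounds(2)
    show "\<bar>dist y y' - dist (G y) (G y')\<bar> \<le> 2 * d" by linarith
  next
    fix x y assume "x \<in> A" "y \<in> B"
    from codis_upper[OF assms(1,2) FG this] bounds(3)
    show "\<bar>dist x (G y) - dist (F x) y\<bar> \<le> 2 * d" by linarith
  qed
qed

lemma dGH_le_via_eps_nets:
  assumes "bounded X" "bounded Y" "X \<noteq> {}" "Y \<noteq> {}"
    and "is_eps_net \<epsilon> X Xe" "is_eps_net \<epsilon> Y Ye" "gh_maps Xe Ye m m m"
  shows "dGH X Y \<le> m / 2 + \<epsilon>"
proof -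
  have "gh_maps X Y (2 * \<epsilon> + m + 0) (0 + m + 2 * \<epsilon>) (\<epsilon> + m + \<epsilon>)"
    using gh_maps_trans[OF gh_maps_trans[OF gh_maps_eps_net[OF assms(5)] assms(7)]
        gh_maps_sym[OF gh_maps_eps_net[OF assms(6)]]] .
  from dGH_le_gh_maps[OF assms(1-4) this] show ?thesis by (simp add: max_def)
qed

lemma Xseq_subset:
  assumes "f ` Xe \<subseteq> Ye" "g ` Ye \<subseteq> Xe"
  shows "Xseq f g Xe Ye n \<subseteq> Xe"
  by (induction n rule: nat_induct2) (use assms in auto)

lemma Xseq_nonempty: "Xe \<noteq> {} \<Longrightarrow> Ye \<noteq> {} \<Longrightarrow> Xseq f g Xe Ye n \<noteq> {}"
  by (induction n rule: nat_induct2) auto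

context
  fixes f :: "'a::metric_space \<Rightarrow> 'b::metric_space" and g :: "'b \<Rightarrow> 'a"
    and Xe :: "'a set" and Ye :: "'b set" and c :: real
  assumes maps_into: "f ` Xe \<subseteq> Ye" "g ` Ye \<subseteq> Xe"
    and distortion_f: "\<And>x x'. x \<in> Xe \<Longrightarrow> x' \<in> Xe \<Longrightarrow> \<bar>dist x x' - dist (f x) (f x')\<bar> \<le> c"
    and distortion_g: "\<And>y y'. y \<in> Ye \<Longrightarrow> y' \<in> Ye \<Longrightarrow> \<bar>dist y y' - dist (g y) (g y')\<bar> \<le> c"
begin

lemma gh_maps_Xseq_Suc_Suc:
  "gh_maps (Xseq f g Xe Ye n) (Xseq f g Xe Ye (Suc (Suc n))) (2 * c) (2 * c) (2 * c)"
proof (rule gh_maps_image)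
  show "(g \<circ> f) ` Xseq f g Xe Ye n = Xseq f g Xe Ye (Suc (Suc n))" by simp
next
  fix x x' assume "x \<in> Xseq f g Xe Ye n" "x' \<in> Xseq f g Xe Ye n"
  with Xseq_subset[OF maps_into] have "x \<in> Xe" "x' \<in> Xe" by auto
  with maps_into(1) have "f x \<in> Ye" "f x' \<in> Ye" by auto
  with distortion_f[OF \<open>x \<in> Xe\<close> \<open>x' \<in> Xe\<close>] distortion_g[OF this]
  show "\<bar>dist x x' - dist ((g \<circ> f) x) ((g \<circ> f) x')\<bar> \<le> 2 * c" by simp
qed

lemma gh_maps_Xseq_even:
  "gh_maps Xe (Xseq f g Xe Ye (2 * j)) (2 * real j * c) (2 * real j * c) (2 * real j * c)"
proof (induction j)
  case 0
  show ?case using gh_maps_refl by simp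
next
  case (Suc j)
  from gh_maps_trans[OF Suc.IH gh_maps_Xseq_Suc_Suc] show ?case by (simp add: algebra_simps)
qed

lemma gh_maps_Xseq_odd:
  "gh_maps Ye (Xseq f g Xe Ye (Suc (2 * j)))
     ((2 * real j + 1) * c) ((2 * real j + 1) * c) ((2 * real j + 1) * c)"
proof (induction j)
  case 0
  have "gh_maps Ye (g ` Ye) c c c" by (rule gh_maps_image[OF refl distortion_g])
  then show ?case by simp
next
  case (Suc j)
  from gh_maps_trans[OF Suc.IH gh_maps_Xseq_Suc_Suc] show ?case by (simp add: algebra_simps)
qed

lemma gh_maps_eps_nets_of_Xseq:
  assumes "gh_maps (Xseq f g Xe Ye k) (Xseq f g Xe Ye (Suc k)) d d d"
  shows "gh_maps Xe Ye ((2 * real k + 1) * c + d) ((2 * real k + 1) * c + d) ((2 * real k + 1) * c + d)"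
proof (cases "even k")
  case True
  then obtain j where k: "k = 2 * j" by (rule evenE)
  from gh_maps_trans[OF gh_maps_trans[OF gh_maps_Xseq_even assms[unfolded k]]
      gh_maps_sym[OF gh_maps_Xseq_odd]]
  show ?thesis unfolding k by (simp add: algebra_simps)
next
  case False
  then obtain j where "k = 2 * j + 1" by (rule oddE)
  then have k: "k = Suc (2 * j)" by simp
  have to_k: "gh_maps Ye (Xseq f g Xe Ye k)
      ((2 * real j + 1) * c) ((2 * real j + 1) * c) ((2 * real j + 1) * c)"
    using gh_maps_Xseq_odd unfolding k .
  have from_Suc_k: "gh_maps (Xseq f g Xe Ye (Suc k)) Xe
      (2 * real (Suc j) * c) (2 * real (Suc j) * c) (2 * real (Suc j) * c)"
    using gh_maps_sym[OF gh_maps_Xseq_even[of "Suc j"]] unfolding k by simp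
  from gh_maps_sym[OF gh_maps_trans[OF gh_maps_trans[OF to_k assms] from_Suc_k]]
  show ?thesis unfolding k by (simp add: algebra_simps)
qed

lemma dGH_le_via_Xseq:
  assumes "bounded X" "bounded Y" "X \<noteq> {}" "Y \<noteq> {}"
    and "is_eps_net \<epsilon> X Xe" "is_eps_net \<epsilon> Y Ye"
    and "dGH (Xseq f g Xe Ye k) (Xseq f g Xe Ye (Suc k)) \<le> \<delta>"
  shows "dGH X Y \<le> (2 * real k + 1) * c / 2 + \<delta> + \<epsilon>"
proof -
  have "Xe \<subseteq> X" using assms(5) unfolding is_eps_net_def by blast
  then have "Xseq f g Xe Ye n \<subseteq> X" for n using Xseq_subset[OF maps_into] by blast
  then have Xseq: "bounded (Xseq f g Xe Ye n)" "Xseq f g Xe Ye n \<noteq> {}" for n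
    using bounded_subset[OF assms(1)]
      Xseq_nonempty[OF eps_net_nonempty[OF assms(5,3)] eps_net_nonempty[OF assms(6,4)]]
    by auto
  have "dGH X Y \<le> ((2 * real k + 1) * c / 2 + \<delta> + \<epsilon>) + \<eta>" if "\<eta> > 0" for \<eta>
  proof -
    have "dGH (Xseq f g Xe Ye k) (Xseq f g Xe Ye (Suc k)) < \<delta> + \<eta>"
      using assms(7) that by linarith
    then have "gh_maps (Xseq f g Xe Ye k) (Xseq f g Xe Ye (Suc k))
        (2 * (\<delta> + \<eta>)) (2 * (\<delta> + \<eta>)) (2 * (\<delta> + \<eta>))"
      by (rule gh_maps_dGH_less[OF Xseq(1,1,2,2)])
    from gh_maps_eps_nets_of_Xseq[OF this]
    have "dGH X Y \<le> ((2 * real k + 1) * c + 2 * (\<delta> + \<eta>)) / 2 + \<epsilon>"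
      by (rule dGH_le_via_eps_nets[OF assms(1-6)])
    then show ?thesis by (simp add: field_simps)
  qed
  then show ?thesis by (rule field_le_epsilon)
qed

end

theorem claim3:
  fixes X :: "'a::metric_space set" and Y :: "'b::metric_space set"
    and Xe :: "'a set" and Ye :: "'b set"
    and f :: "'a \<Rightarrow> 'b" and g :: "'b \<Rightarrow> 'a"
    and \<epsilon> \<delta> :: real and k :: nat
  assumes "compact X" "compact Y" "X \<noteq> {}" "Y \<noteq> {}"
    and "\<epsilon> \<ge> 0"
    and "finite Xe" "is_eps_net \<epsilon> X Xe"
    and "finite Ye" "is_eps_net \<epsilon> Y Ye"
    and "f ` Xe \<subseteq> Ye" "g ` Ye \<subseteq> Xe"
    and "(1/2) * max (dis f Xe) (dis g Ye) = dGH_hat Xe Ye"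
    and "\<delta> \<ge> 0"
    and "dGH (Xseq f g Xe Ye k) (Xseq f g Xe Ye (Suc k)) \<le> \<delta>"
  shows "dGH X Y \<le> (2 * real k + 1) * dGH_hat X Y + (2 * real k + 2) * \<epsilon> + \<delta>"
proof -
  define r where "r = dGH_hat Xe Ye"
  have bounded: "bounded X" "bounded Y" using assms(1,2) by (simp_all add: compact_imp_bounded)
  have "dis f Xe \<le> 2 * r" "dis g Ye \<le> 2 * r" using assms(12) unfolding r_def by linarith+
  then have distortion_f: "\<And>x x'. x \<in> Xe \<Longrightarrow> x' \<in> Xe \<Longrightarrow> \<bar>dist x x' - dist (f x) (f x')\<bar> \<le> 2 * r"
    and distortion_g: "\<And>y y'. y \<in> Ye \<Longrightarrow> y' \<in> Ye \<Longrightarrow> \<bar>dist y y' - dist (g y) (g y')\<bar> \<le> 2 * r"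
    using dis_upper[OF finite_imp_bounded[OF assms(6)] finite_imp_bounded[OF assms(8)] assms(10)]
      dis_upper[OF finite_imp_bounded[OF assms(8)] finite_imp_bounded[OF assms(6)] assms(11)]
    by fastforce+
  from dGH_le_via_Xseq[OF assms(10,11) distortion_f distortion_g bounded assms(3,4,7,9,14)]
  have "dGH X Y \<le> (2 * real k + 1) * r + \<delta> + \<epsilon>" by simp
  also have "\<dots> \<le> (2 * real k + 1) * (dGH_hat X Y + \<epsilon>) + \<delta> + \<epsilon>"
    using dGH_hat_eps_nets_le[OF bounded assms(3,4,7,9)] unfolding r_def
    by (intro add_right_mono mult_left_mono) auto
  finally show ?thesis by (simp add: algebra_simps)
qed

end
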